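(* Let $0<p\le1$, $\ell^p=\{\{x_n\}\subset\mathbb R:\sum_{n=1}^\infty|x_n|^p<\infty\}$, and $D(x,y)=\big(\sum_{n=1}^\infty|x_n-y_n|^p\big)^{1/p}$, which is a $b$-metric with coefficient $K=2^{1/p}$. Let $q=\frac{p}{p+1}$, so that $(2K)^q=2$. Then the function $$d(x,y)=\inf\Big\{\sum_{i=1}^n D^{q}(x_i,x_{i+1}): x_1=x,x_2,\dots,x_{n+1}=y\in \ell^p,\ n\in\mathbb N\Big\}$$ equals $\big(\sum_{n=1}^\infty|x_n-y_n|^p\big)^{\frac{1}{p+1}}$ for all $x,y\in\ell^p$, and this is a metric on $\ell^p$. *)

theory Defs
  imports "HOL-Analysis.Analysis"
begin

text \<open>The sequence space l^p (sequences indexed from 0 instead of 1).\<close>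
definition lp :: "real \<Rightarrow> (nat \<Rightarrow> real) set" where
  "lp p = {x. summable (\<lambda>n. \<bar>x n\<bar> powr p)}"

definition Dp :: "real \<Rightarrow> (nat \<Rightarrow> real) \<Rightarrow> (nat \<Rightarrow> real) \<Rightarrow> real" where
  "Dp p x y = (\<Sum>n. \<bar>x n - y n\<bar> powr p) powr (1 / p)"

definition chain_d :: "real \<Rightarrow> (nat \<Rightarrow> real) \<Rightarrow> (nat \<Rightarrow> real) \<Rightarrow> real" where
  "chain_d p x y = Inf {(\<Sum>i<n. (Dp p (c i) (c (Suc i))) powr (p / (p + 1))) | n c.
      n \<ge> 1 \<and> c 0 = x \<and> c n = y \<and> (\<forall>i\<le>n. c i \<in> lp p)}"

definition metric_on :: "'a set \<Rightarrow> ('a \<Rightarrow> 'a \<Rightarrow> real) \<Rightarrow> bool" where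
  "metric_on S d \<longleftrightarrow>
     (\<forall>x\<in>S. \<forall>y\<in>S. 0 \<le> d x y) \<and>
     (\<forall>x\<in>S. \<forall>y\<in>S. d x y = 0 \<longleftrightarrow> x = y) \<and>
     (\<forall>x\<in>S. \<forall>y\<in>S. d x y = d y x) \<and>
     (\<forall>x\<in>S. \<forall>y\<in>S. \<forall>z\<in>S. d x z \<le> d x y + d y z)"

end

theory Submission
  imports Defs
begin

text \<open>
  Write \<open>S(x,y) = \<Sum>n. \<bar>x n - y n\<bar> powr p\<close>. Because \<open>t \<mapsto> t powr r\<close> is subadditive for
  \<open>0 < r \<le> 1\<close>, \<open>S\<close> is a genuine metric on \<open>l\<^sup>p\<close> (no exponent \<open>1/p\<close> is taken), and so is every
  power \<open>S powr r\<close> with \<open>0 < r \<le> 1\<close>. Since \<open>D powr (p/(p+1)) = S powr (1/(p+1))\<close>, each link of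
  a chain contributes \<open>S powr (1/(p+1))\<close>, and by the triangle inequality for this metric no chain
  beats the one-step chain from \<open>x\<close> to \<open>y\<close>; hence the infimum is attained there.
\<close>

lemma powr_add_le:
  fixes a b r :: real
  assumes "0 \<le> a" "0 \<le> b" "0 < r" "r \<le> 1"
  shows "(a + b) powr r \<le> a powr r + b powr r"
proof (cases "a = 0 \<or> b = 0")
  case True
  then show ?thesis using assms by auto
next
  case False
  with assms have "a > 0" "b > 0" by auto
  define s where "s = a + b"
  have s: "s > 0" using \<open>a > 0\<close> \<open>b > 0\<close> by (simp add: s_def)
  have "a / s \<le> (a / s) powr r" "b / s \<le> (b / s) powr r"
    using powr_mono'[of r 1 "a / s"] powr_mono'[of r 1 "b / s"] assms \<open>a > 0\<close> \<open>b > 0\<close> s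
    by (auto simp: s_def)
  then have "a / s + b / s \<le> (a powr r + b powr r) / s powr r"
    by (simp add: powr_divide add_divide_distrib)
  moreover have "a / s + b / s = 1"
    using s by (simp add: s_def add_divide_distrib[symmetric])
  ultimately show ?thesis
    using s by (simp add: s_def field_simps)
qed

lemma abs_diff_powr_triangle:
  fixes a b c p :: real
  assumes "0 < p" "p \<le> 1"
  shows "\<bar>a - c\<bar> powr p \<le> \<bar>a - b\<bar> powr p + \<bar>b - c\<bar> powr p"
proof -
  have "\<bar>a - c\<bar> powr p \<le> (\<bar>a - b\<bar> + \<bar>b - c\<bar>) powr p"
    using assms by (intro powr_mono2) auto
  also have "\<dots> \<le> \<bar>a - b\<bar> powr p + \<bar>b - c\<bar> powr p"
    using assms by (intro powr_add_le) auto
  finally show ?thesis .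
qed

lemma metric_on_powr:
  assumes "metric_on S d" "0 < r" "r \<le> 1"
  shows "metric_on S (\<lambda>x y. d x y powr r)"
proof -
  have triangle: "d x z powr r \<le> d x y powr r + d y z powr r"
    if "x \<in> S" "y \<in> S" "z \<in> S" for x y z
  proof -
    have "d x z powr r \<le> (d x y + d y z) powr r"
      using assms that by (intro powr_mono2) (auto simp: metric_on_def)
    also have "\<dots> \<le> d x y powr r + d y z powr r"
      using assms that by (intro powr_add_le) (auto simp: metric_on_def)
    finally show ?thesis .
  qed
  show ?thesis
    using assms triangle by (auto simp: metric_on_def)
qed

lemma metric_on_chain_le:
  assumes "metric_on S d" "\<forall>i\<le>n. c i \<in> S"
  shows "d (c 0) (c n) \<le> (\<Sum>i<n. d (c i) (c (Suc i)))"
  using assms(2)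
proof (induction n)
  case 0
  then have "d (c 0) (c 0) = 0"
    using assms(1) unfolding metric_on_def by blast
  then show ?case by simp
next
  case (Suc n)
  then have "d (c 0) (c (Suc n)) \<le> d (c 0) (c n) + d (c n) (c (Suc n))"
    using assms(1) unfolding metric_on_def by simp
  also have "\<dots> \<le> (\<Sum>i<Suc n. d (c i) (c (Suc i)))"
    using Suc by simp
  finally show ?case .
qed

definition lp_dist :: "real \<Rightarrow> (nat \<Rightarrow> real) \<Rightarrow> (nat \<Rightarrow> real) \<Rightarrow> real" where
  "lp_dist p x y = (\<Sum>n. \<bar>x n - y n\<bar> powr p)"

lemma summable_abs_diff_powr:
  assumes "0 < p" "p \<le> 1" "x \<in> lp p" "y \<in> lp p"
  shows "summable (\<lambda>n. \<bar>x n - y n\<bar> powr p)"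
proof (rule summable_comparison_test'[where N = 0])
  show "summable (\<lambda>n. \<bar>x n - 0\<bar> powr p + \<bar>0 - y n\<bar> powr p)"
    using assms by (auto simp: lp_def intro: summable_add)
  show "norm (\<bar>x n - y n\<bar> powr p) \<le> \<bar>x n - 0\<bar> powr p + \<bar>0 - y n\<bar> powr p" for n
    using abs_diff_powr_triangle[OF assms(1,2), where a = "x n" and b = 0 and c = "y n"] by simp
qed

lemma metric_on_lp_dist:
  assumes "0 < p" "p \<le> 1"
  shows "metric_on (lp p) (lp_dist p)"
  unfolding metric_on_def
proof (intro conjI ballI)
  fix x y z assume xyz: "x \<in> lp p" "y \<in> lp p" "z \<in> lp p"
  note summable = summable_abs_diff_powr[OF assms]
  show "0 \<le> lp_dist p x y"
    unfolding lp_dist_def using summable xyz by (intro suminf_nonneg) auto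
  show "lp_dist p x y = lp_dist p y x"
    unfolding lp_dist_def by (simp add: abs_minus_commute)
  show "lp_dist p x y = 0 \<longleftrightarrow> x = y"
  proof
    assume "lp_dist p x y = 0"
    then have "\<forall>n. \<bar>x n - y n\<bar> powr p = 0"
      using summable xyz unfolding lp_dist_def by (subst (asm) suminf_eq_zero_iff) auto
    then show "x = y" by auto
  qed (simp add: lp_dist_def)
  have "lp_dist p x z \<le> (\<Sum>n. \<bar>x n - y n\<bar> powr p + \<bar>y n - z n\<bar> powr p)"
    unfolding lp_dist_def
    using abs_diff_powr_triangle[OF assms] summable xyz
    by (intro suminf_le) (auto intro: summable_add)
  also have "\<dots> = lp_dist p x y + lp_dist p y z"
    unfolding lp_dist_def using summable xyz by (intro suminf_add[symmetric]) auto
  finally show "lp_dist p x z \<le> lp_dist p x y + lp_dist p y z" .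
qed

lemma Dp_powr_eq_lp_dist_powr:
  assumes "0 < p"
  shows "Dp p x y powr (p / (p + 1)) = lp_dist p x y powr (1 / (p + 1))"
  using assms by (simp add: Dp_def lp_dist_def powr_powr)

lemma chain_d_eq_lp_dist_powr:
  assumes "0 < p" "p \<le> 1" "x \<in> lp p" "y \<in> lp p"
  shows "chain_d p x y = lp_dist p x y powr (1 / (p + 1))"
  unfolding chain_d_def
proof (rule cInf_eq_minimum)
  let ?c = "\<lambda>i::nat. if i = 0 then x else y"
  have "lp_dist p x y powr (1 / (p + 1)) = (\<Sum>i<1. Dp p (?c i) (?c (Suc i)) powr (p / (p + 1)))"
    using Dp_powr_eq_lp_dist_powr[OF assms(1)] by simp
  moreover have "?c 0 = x" "?c 1 = y" "\<forall>i\<le>1. ?c i \<in> lp p"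
    using assms by auto
  ultimately show "lp_dist p x y powr (1 / (p + 1)) \<in> {\<Sum>i<n. Dp p (c i) (c (Suc i)) powr (p / (p + 1)) | n c.
      n \<ge> 1 \<and> c 0 = x \<and> c n = y \<and> (\<forall>i\<le>n. c i \<in> lp p)}"
    by (intro CollectI exI[of _ 1] exI[of _ ?c]) (metis order_refl)
next
  fix v assume "v \<in> {\<Sum>i<n. Dp p (c i) (c (Suc i)) powr (p / (p + 1)) | n c.
      n \<ge> 1 \<and> c 0 = x \<and> c n = y \<and> (\<forall>i\<le>n. c i \<in> lp p)}"
  then obtain n c where v: "v = (\<Sum>i<n. Dp p (c i) (c (Suc i)) powr (p / (p + 1)))"
    and c: "c 0 = x" "c n = y" "\<forall>i\<le>n. c i \<in> lp p"
    by blast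
  have "metric_on (lp p) (\<lambda>x y. lp_dist p x y powr (1 / (p + 1)))"
    using assms by (intro metric_on_powr metric_on_lp_dist) auto
  from metric_on_chain_le[OF this c(3)]
  show "lp_dist p x y powr (1 / (p + 1)) \<le> v"
    unfolding v c(1,2)[symmetric] using Dp_powr_eq_lp_dist_powr[OF assms(1)] by simp
qed

theorem mainTheorem12:
  fixes p :: real
  assumes "0 < p" and "p \<le> 1"
  shows "(\<forall>x\<in>lp p. \<forall>y\<in>lp p.
            chain_d p x y = (\<Sum>n. \<bar>x n - y n\<bar> powr p) powr (1 / (p + 1)))
         \<and> metric_on (lp p) (chain_d p)"
proof
  have eq: "\<forall>x\<in>lp p. \<forall>y\<in>lp p. chain_d p x y = lp_dist p x y powr (1 / (p + 1))"
    using chain_d_eq_lp_dist_powr[OF assms] by blast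
  then show "\<forall>x\<in>lp p. \<forall>y\<in>lp p. chain_d p x y = (\<Sum>n. \<bar>x n - y n\<bar> powr p) powr (1 / (p + 1))"
    by (simp add: lp_dist_def)
  have "metric_on (lp p) (\<lambda>x y. lp_dist p x y powr (1 / (p + 1)))"
    using assms by (intro metric_on_powr metric_on_lp_dist) auto
  with eq show "metric_on (lp p) (chain_d p)"
    by (simp add: metric_on_def)
qed

end
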